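(* Let $\mathcal Z\subseteq[0,1]^d$ and suppose $y_1(\mathbf{x})=y_2(\mathbf{x})$ for all $\mathbf{x}\notin\mathcal Z$. Then for any admissible algorithm with budget $n$, $\mathbb{P}_2(\tau(\mathcal Z)>t)=\mathbb{P}_1(\tau(\mathcal Z)>t)$ for all $t$, where $\mathbb{P}_i$ denotes probability when the algorithm is run on Problem $i$.
   Context: Problem $i$ ($i=1,2$): objective $y_i:[0,1]^d\to\mathbb{R}$; a query at $\mathbf{x}$ returns $Y(\mathbf{x})=y_i(\mathbf{x})+\varepsilon(\mathbf{x})$ with $\varepsilon(\mathbf{x})\sim N(0,\sigma^2)$, $\sigma^2\ge0$, independent of everything else. Admissible algorithm with budget $n$: (i) $\mathbf{x}_1$ deterministic or a measurable function of a random vector $U_1$; (ii) for $t=1,\dots,n-1$, $\mathbf{x}_{t+1}$ a measurable function of $\mathbf{x}_1,Y(\mathbf{x}_1),\dots,\mathbf{x}_t,Y(\mathbf{x}_t)$ and a random vector $U_{t+1}$; (iii) output $\hat{\mathbf{x}}_n^*$ a measurable function of the full history and a random vector $U_n^*$; (iv) $\hat{\mathbf{x}}_n^*\in\{\mathbf{x}_1,\dots,\mathbf{x}_n\}$; the $U$'s are independent random vectors independent of the noise. First hitting time: $\tau(\mathcal Z)=\min\{t\in\{1,\dots,n\}:\mathbf{x}_t\in\mathcal Z\}$ if some $\mathbf{x}_t\in\mathcal Z$, and $\tau(\mathcal Z)=n+1$ otherwise. *)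

theory Defs
  imports "HOL-Probability.Probability"
begin

text \<open>The domain [0,1]^d, with points represented as real^'d (d = CARD('d)).\<close>
definition unit_cube :: "(real ^ 'd) set" where
  "unit_cube = {x. \<forall>i. 0 \<le> x $ i \<and> x $ i \<le> 1}"

definition noise_law :: "real \<Rightarrow> real measure" where
  "noise_law \<sigma> = (if \<sigma> = 0 then return borel 0 else density lborel (normal_density 0 \<sigma>))"

text \<open>Histories: the history after t queries is the function mapping s in {1..t} to the
  pair (x_s, Y(x_s)) (undefined elsewhere), an element of the product space below.\<close>
type_synonym 'd history = "nat \<Rightarrow> (real ^ 'd) \<times> real"

definition hist_space :: "nat set \<Rightarrow> ('d::finite) history measure" where
  "hist_space I = (\<Pi>\<^sub>M s\<in>I. (borel :: (real ^ 'd) measure) \<Otimes>\<^sub>M (borel :: real measure))"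

text \<open>Admissible algorithm with budget n: query rules A t (t = 1..n), where x_t = A t h_{t-1} U_t
  is a jointly measurable function of the history of the first t-1 queries and of the random
  vector U_t (for t = 1 the history is empty, so x_1 is a measurable function of U_1, possibly
  constant); and an output rule O, jointly measurable in the full history and U_n^*, whose value
  is always one of the queried points.\<close>
definition admissible ::
  "nat \<Rightarrow> (nat \<Rightarrow> ('d::finite) history \<Rightarrow> 'u::euclidean_space \<Rightarrow> real ^ 'd)
       \<Rightarrow> ('d history \<Rightarrow> 'u \<Rightarrow> real ^ 'd) \<Rightarrow> bool" where
  "admissible n A Out \<longleftrightarrow>
     (\<forall>t\<in>{1..n}.
        (\<lambda>(h, u). A t h u) \<in> (hist_space {1..<t} \<Otimes>\<^sub>M (borel :: 'u measure)) \<rightarrow>\<^sub>M borel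
      \<and> (\<forall>h\<in>space (hist_space {1..<t}). \<forall>u. A t h u \<in> unit_cube))
   \<and> (\<lambda>(h, u). Out h u) \<in> (hist_space {1..n} \<Otimes>\<^sub>M (borel :: 'u measure)) \<rightarrow>\<^sub>M borel
   \<and> (\<forall>h\<in>space (hist_space {1..n}). \<forall>u. Out h u \<in> {fst (h s) |s. s \<in> {1..n}})"

text \<open>Randomness on the probability space M: random vectors U_1..U_n and U_n^* (indexed n+1
  below), and noise variables E_1..E_n (E_t is the noise of the t-th query), with E_t ~ N(0,sigma^2),
  all 2n+1 variables jointly (mutually) independent.\<close>
definition all_U :: "nat \<Rightarrow> (nat \<Rightarrow> 'w \<Rightarrow> 'u) \<Rightarrow> ('w \<Rightarrow> 'u) \<Rightarrow> nat \<Rightarrow> 'w \<Rightarrow> 'u" where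
  "all_U n U Ustar t = (if t = n + 1 then Ustar else U t)"

definition admissible_randomness ::
  "'w measure \<Rightarrow> nat \<Rightarrow> real \<Rightarrow> (nat \<Rightarrow> 'w \<Rightarrow> 'u::euclidean_space) \<Rightarrow> ('w \<Rightarrow> 'u)
     \<Rightarrow> (nat \<Rightarrow> 'w \<Rightarrow> real) \<Rightarrow> bool" where
  "admissible_randomness M n \<sigma> U Ustar E \<longleftrightarrow>
     prob_space M \<and> 0 \<le> \<sigma>
   \<and> (\<forall>t\<in>{1..n+1}. all_U n U Ustar t \<in> borel_measurable M)
   \<and> (\<forall>t\<in>{1..n}. E t \<in> borel_measurable M)
   \<and> (\<forall>t\<in>{1..n}. distr M borel (E t) = noise_law \<sigma>)
   \<and> prob_space.indep_sets M
       (\<lambda>i. case i of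
              Inl t \<Rightarrow> {all_U n U Ustar t -` A \<inter> space M |A. A \<in> sets (borel :: 'u measure)}
            | Inr t \<Rightarrow> {E t -` B \<inter> space M |B. B \<in> sets (borel :: real measure)})
       (Inl ` {1..n+1} \<union> Inr ` {1..n})"

fun hist :: "(nat \<Rightarrow> ('d::finite) history \<Rightarrow> 'u \<Rightarrow> real ^ 'd) \<Rightarrow> (real ^ 'd \<Rightarrow> real)
    \<Rightarrow> (nat \<Rightarrow> 'w \<Rightarrow> 'u) \<Rightarrow> (nat \<Rightarrow> 'w \<Rightarrow> real) \<Rightarrow> nat \<Rightarrow> 'w \<Rightarrow> 'd history" where
  "hist A y U E 0 \<omega> = (\<lambda>_. undefined)"
| "hist A y U E (Suc t) \<omega> =
     (let h = hist A y U E t \<omega>; x = A (Suc t) h (U (Suc t) \<omega>)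
      in h(Suc t := (x, y x + E (Suc t) \<omega>)))"

definition query :: "(nat \<Rightarrow> ('d::finite) history \<Rightarrow> 'u \<Rightarrow> real ^ 'd) \<Rightarrow> (real ^ 'd \<Rightarrow> real)
    \<Rightarrow> (nat \<Rightarrow> 'w \<Rightarrow> 'u) \<Rightarrow> (nat \<Rightarrow> 'w \<Rightarrow> real) \<Rightarrow> nat \<Rightarrow> 'w \<Rightarrow> real ^ 'd" where
  "query A y U E t \<omega> = A t (hist A y U E (t - 1) \<omega>) (U t \<omega>)"

definition first_hit :: "nat \<Rightarrow> 'a set \<Rightarrow> (nat \<Rightarrow> 'a) \<Rightarrow> nat" where
  "first_hit n Z x = (if \<exists>t\<in>{1..n}. x t \<in> Z then (LEAST t. t \<in> {1..n} \<and> x t \<in> Z) else n + 1)"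

end

theory Submission
  imports Defs
begin

text \<open>Run both problems on the same sample point \<omega>. As long as no query has entered Z,
  every query lies in the cube outside Z, where y1 and y2 agree, so the two runs see the same
  observations and hence produce the same histories and the same next query. Thus the first
  hitting time of Z is the same random variable for both problems, not merely equal in law;
  in particular neither the noise law nor independence plays any role.\<close>

lemma hist_in_hist_space: "hist A y U E t \<omega> \<in> space (hist_space {1..<Suc t})"
proof (induction t)
  case 0
  then show ?case by (simp add: hist_space_def space_PiM)
next
  case (Suc t)
  have "hist A y U E t \<omega> \<in> {1..<Suc t} \<rightarrow>\<^sub>E UNIV"
    using Suc by (simp add: hist_space_def space_PiM space_pair_measure)
  then have "hist A y U E (Suc t) \<omega> \<in> insert (Suc t) {1..<Suc t} \<rightarrow>\<^sub>E UNIV"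
    unfolding hist.simps Let_def by (rule PiE_fun_upd[rotated]) simp
  moreover have "insert (Suc t) {1..<Suc t} = {1..<Suc (Suc t)}" by auto
  ultimately show ?case by (simp add: hist_space_def space_PiM space_pair_measure)
qed

lemma hist_cong_before_hit:
  assumes range_A: "\<forall>t\<in>{1..n}. \<forall>h\<in>space (hist_space {1..<t}). \<forall>u. A t h u \<in> C"
    and agree: "\<forall>x\<in>C - Z. y1 x = y2 x"
    and "t \<le> n" and "\<forall>s\<in>{1..t}. query A y1 U E s \<omega> \<notin> Z"
  shows "hist A y1 U E t \<omega> = hist A y2 U E t \<omega>"
  using assms(3,4)
proof (induction t)
  case 0
  then show ?case by simp
next
  case (Suc t)
  then have IH: "hist A y1 U E t \<omega> = hist A y2 U E t \<omega>" by auto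
  define x where "x = A (Suc t) (hist A y1 U E t \<omega>) (U (Suc t) \<omega>)"
  have "x \<notin> Z" using Suc.prems(2)[rule_format, of "Suc t"] by (simp add: x_def query_def)
  moreover have "x \<in> C"
    using range_A Suc.prems(1) hist_in_hist_space[of A y1 U E t \<omega>] by (simp add: x_def)
  ultimately have "y1 x = y2 x" using agree by blast
  then show ?case using IH by (simp add: Let_def x_def)
qed

lemma query_cong_before_hit:
  assumes "\<forall>t\<in>{1..n}. \<forall>h\<in>space (hist_space {1..<t}). \<forall>u. A t h u \<in> C"
    and "\<forall>x\<in>C - Z. y1 x = y2 x"
    and "s \<in> {1..n}" and "\<forall>r\<in>{1..<s}. query A y1 U E r \<omega> \<notin> Z"
  shows "query A y1 U E s \<omega> = query A y2 U E s \<omega>"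
proof -
  have "{1..s - 1} = {1..<s}" using assms(3) by auto
  then have "hist A y1 U E (s - 1) \<omega> = hist A y2 U E (s - 1) \<omega>"
    by (intro hist_cong_before_hit[OF assms(1,2)]) (use assms(3,4) in auto)
  then show ?thesis by (simp add: query_def)
qed

lemma first_hit_hits:
  assumes "t \<in> {1..n}" "x t \<in> Z"
  shows "first_hit n Z x \<in> {1..n}" "x (first_hit n Z x) \<in> Z"
    and "\<forall>r\<in>{1..<first_hit n Z x}. x r \<notin> Z"
proof -
  let ?P = "\<lambda>t. t \<in> {1..n} \<and> x t \<in> Z"
  have hit: "\<exists>t\<in>{1..n}. x t \<in> Z" using assms by blast
  have first_hit: "first_hit n Z x = (LEAST t. ?P t)"
    by (simp only: first_hit_def if_P[OF hit])
  show "first_hit n Z x \<in> {1..n}" "x (first_hit n Z x) \<in> Z"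
    using LeastI[of ?P t] assms unfolding first_hit by auto
  show "\<forall>r\<in>{1..<first_hit n Z x}. x r \<notin> Z"
  proof
    fix r assume r: "r \<in> {1..<first_hit n Z x}"
    then have "\<not> ?P r" using not_less_Least[of r ?P] unfolding first_hit by simp
    then show "x r \<notin> Z" using r \<open>first_hit n Z x \<in> {1..n}\<close> by simp
  qed
qed

lemma first_hit_no_hit:
  assumes "\<forall>t\<in>{1..n}. x t \<notin> Z"
  shows "first_hit n Z x = n + 1"
  using assms by (simp add: first_hit_def)

lemma first_hit_avoids:
  assumes "r \<in> {1..<first_hit n Z x}"
  shows "x r \<notin> Z"
proof (cases "\<exists>t\<in>{1..n}. x t \<in> Z")
  case True
  then obtain t where "t \<in> {1..n}" "x t \<in> Z" by blast
  then show ?thesis using first_hit_hits(3)[where x = x] assms by blast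
next
  case False
  then show ?thesis using assms first_hit_no_hit[of n x Z] by auto
qed

lemma first_hit_eqI:
  assumes "s \<in> {1..n}" "x s \<in> Z" "\<forall>r\<in>{1..<s}. x r \<notin> Z"
  shows "first_hit n Z x = s"
proof -
  have hit: "\<exists>t\<in>{1..n}. x t \<in> Z" using assms(1,2) by blast
  have "(LEAST t. t \<in> {1..n} \<and> x t \<in> Z) = s"
  proof (rule Least_equality)
    fix r assume "r \<in> {1..n} \<and> x r \<in> Z"
    then show "s \<le> r" using assms(3) by (meson atLeastAtMost_iff atLeastLessThan_iff not_le)
  qed (use assms in auto)
  then show ?thesis by (simp only: first_hit_def if_P[OF hit])
qed

lemma first_hit_cong:
  assumes "\<forall>r\<in>{1..n}. r \<le> first_hit n Z x \<longrightarrow> x r = x' r"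
  shows "first_hit n Z x = first_hit n Z x'"
proof (cases "\<exists>t\<in>{1..n}. x t \<in> Z")
  case True
  then obtain t where t: "t \<in> {1..n}" "x t \<in> Z" by blast
  define m where "m = first_hit n Z x"
  have m: "m \<in> {1..n}" "x m \<in> Z" "\<forall>r\<in>{1..<m}. x r \<notin> Z"
    using first_hit_hits[where x = x, OF t] unfolding m_def by simp_all
  moreover have "\<forall>r\<in>{1..m}. x r = x' r" using assms m(1) by (simp add: m_def)
  ultimately have "first_hit n Z x' = m" by (intro first_hit_eqI) auto
  then show ?thesis by (simp add: m_def)
next
  case False
  then have "\<forall>r\<in>{1..n}. x r = x' r" using assms first_hit_no_hit[of n x Z] by auto
  then show ?thesis using False first_hit_no_hit[of n x' Z] first_hit_no_hit[of n x Z] by auto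
qed

theorem lemma2:
  fixes n :: nat and \<sigma> :: real
    and Z :: "(real ^ 'd::finite) set"
    and y1 y2 :: "real ^ 'd \<Rightarrow> real"
    and A :: "nat \<Rightarrow> 'd history \<Rightarrow> 'u::euclidean_space \<Rightarrow> real ^ 'd"
    and Out :: "'d history \<Rightarrow> 'u \<Rightarrow> real ^ 'd"
    and M :: "'w measure" and U :: "nat \<Rightarrow> 'w \<Rightarrow> 'u" and Ustar :: "'w \<Rightarrow> 'u"
    and E :: "nat \<Rightarrow> 'w \<Rightarrow> real"
  assumes "Z \<subseteq> unit_cube"
    and "\<forall>x\<in>unit_cube - Z. y1 x = y2 x"
    and "admissible n A Out"
    and "admissible_randomness M n \<sigma> U Ustar E"
  shows "\<forall>t::real.
           measure M {\<omega> \<in> space M. real (first_hit n Z (\<lambda>s. query A y2 U E s \<omega>)) > t}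
         = measure M {\<omega> \<in> space M. real (first_hit n Z (\<lambda>s. query A y1 U E s \<omega>)) > t}"
proof -
  have range_A: "\<forall>t\<in>{1..n}. \<forall>h\<in>space (hist_space {1..<t}). \<forall>u. A t h u \<in> unit_cube"
    using assms(3) by (simp add: admissible_def)
  have "first_hit n Z (\<lambda>s. query A y1 U E s \<omega>) = first_hit n Z (\<lambda>s. query A y2 U E s \<omega>)" for \<omega>
  proof (rule first_hit_cong, intro ballI impI)
    fix s assume s: "s \<in> {1..n}" "s \<le> first_hit n Z (\<lambda>s. query A y1 U E s \<omega>)"
    then have "\<forall>r\<in>{1..<s}. query A y1 U E r \<omega> \<notin> Z"
      using first_hit_avoids[of _ n Z "\<lambda>s. query A y1 U E s \<omega>"] by auto
    then show "query A y1 U E s \<omega> = query A y2 U E s \<omega>"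
      by (rule query_cong_before_hit[OF range_A assms(2) s(1)])
  qed
  then show ?thesis by simp
qed

end
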